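(* Let $G$ be an NCI-hypergraph. Then no two hyperedges of $G$ intersect.
   Context: A simple hypergraph is a pair $G=(V,E)$, $V$ finite, $E\subseteq 2^V$, assumed minimal (no edge properly contains another); $k$-edges with $k\ge 3$ are called hyperedges. The edge ideal $I(G)$ is the squarefree monomial ideal in $k[V]$ ($k$ a field) generated by $\prod_{v\in e}v$, $e\in E$. A nearly complete intersection is a squarefree monomial ideal $I$ that is not a complete intersection such that for every variable $x$ in the support of $I$, the ideal $I(x=1)$ (substituting $x=1$ in the generators) is a complete intersection. $G$ is an NCI-hypergraph if $I(G)$ is a nearly complete intersection. *)

theory Defs
  imports Main
begin

definition simple_hypergraph :: "'a set \<Rightarrow> 'a set set \<Rightarrow> bool" where
  "simple_hypergraph V E \<longleftrightarrow> finite V \<and> E \<subseteq> Pow V \<and>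
     (\<forall>e\<in>E. \<forall>f\<in>E. e \<subseteq> f \<longrightarrow> e = f)"

text \<open>Squarefree monomial ideals are encoded by a (finite) set F of supports:
  the set F stands for the ideal generated by the squarefree monomials
  prod_{v in S} v with S in F.  Its minimal monomial generators are the monomials
  whose supports are the inclusion-minimal members of F.\<close>
definition min_supports :: "'a set set \<Rightarrow> 'a set set" where
  "min_supports F = {S \<in> F. \<forall>T\<in>F. T \<subseteq> S \<longrightarrow> T = S}"

text \<open>Edge ideal I(G): generated by prod_{v in e} v for e in E.\<close>
definition edge_ideal :: "'a set set \<Rightarrow> 'a set set" where
  "edge_ideal E = E"

definition ideal_support :: "'a set set \<Rightarrow> 'a set" where
  "ideal_support F = \<Union> (min_supports F)"

text \<open>A monomial ideal is a complete intersection iff its minimal monomial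
  generators are pairwise coprime, i.e. (squarefree case) have pairwise
  disjoint supports.\<close>
definition sqfree_complete_intersection :: "'a set set \<Rightarrow> bool" where
  "sqfree_complete_intersection F \<longleftrightarrow>
     (\<forall>S\<in>min_supports F. \<forall>T\<in>min_supports F. S \<noteq> T \<longrightarrow> S \<inter> T = {})"

text \<open>I(x=1): substitute x = 1 in the generators.\<close>
definition subst_one :: "'a set set \<Rightarrow> 'a \<Rightarrow> 'a set set" where
  "subst_one F x = (\<lambda>S. S - {x}) ` F"

definition nearly_complete_intersection :: "'a set set \<Rightarrow> bool" where
  "nearly_complete_intersection F \<longleftrightarrow>
     \<not> sqfree_complete_intersection F \<and>
     (\<forall>x\<in>ideal_support F. sqfree_complete_intersection (subst_one F x))"

definition NCI_hypergraph :: "'a set \<Rightarrow> 'a set set \<Rightarrow> bool" where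
  "NCI_hypergraph V E \<longleftrightarrow> simple_hypergraph V E \<and>
     nearly_complete_intersection (edge_ideal E)"

definition hyperedge :: "'a set set \<Rightarrow> 'a set \<Rightarrow> bool" where
  "hyperedge E e \<longleftrightarrow> e \<in> E \<and> card e \<ge> 3"

end

theory Submission
  imports Defs
begin

text \<open>If E(y=1) is a complete intersection, two edges through y meet only in y,
  since removing y leaves two minimal generators that would otherwise share a variable.
  Hence distinct edges of an NCI-hypergraph meet in at most one vertex. Now let hyperedges
  e and f meet in x and pick a \<in> e - {x}. In E(a=1) the minimal generator below f must be
  disjoint from e - {a}; it comes from an edge through a, and linearity forces that edge to be
  a 2-edge {a, b} with b \<in> f - {x}. But then in E(x=1) the minimal generator below {a, b} can
  be neither e - {x}, nor f - {x}, nor disjoint from both.\<close>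

lemma exists_min_supports_subset:
  assumes "finite S" "S \<in> F"
  shows "\<exists>m\<in>min_supports F. m \<subseteq> S"
proof -
  let ?B = "{T \<in> F. T \<subseteq> S}"
  have "finite ?B"
    using \<open>finite S\<close> by (rule rev_finite_subset[OF finite_Pow_iff[THEN iffD2]]) blast
  moreover have "S \<in> ?B"
    using \<open>S \<in> F\<close> by blast
  ultimately obtain m where "m \<in> ?B" "\<forall>T \<in> ?B. T \<subseteq> m \<longrightarrow> m = T"
    by (meson finite_has_minimal2)
  then have "m \<in> min_supports F"
    unfolding min_supports_def by auto
  with \<open>m \<in> ?B\<close> show ?thesis
    by blast
qed

lemma sqfree_complete_intersection_min_supports_eq:
  assumes "sqfree_complete_intersection F" "S \<in> min_supports F" "T \<in> min_supports F"
    "z \<in> S" "z \<in> T"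
  shows "S = T"
  using assms unfolding sqfree_complete_intersection_def by blast

lemma min_supports_antichain:
  assumes "\<forall>g\<in>E. \<forall>h\<in>E. g \<subseteq> h \<longrightarrow> g = h"
  shows "min_supports E = E"
  using assms unfolding min_supports_def by blast

lemma min_supports_subst_one_edge:
  assumes antichain: "\<forall>g\<in>E. \<forall>h\<in>E. g \<subseteq> h \<longrightarrow> g = h"
    and "g \<in> E" "y \<in> g"
  shows "g - {y} \<in> min_supports (subst_one E y)"
proof -
  have "h - {y} = g - {y}" if "h \<in> E" "h - {y} \<subseteq> g - {y}" for h
  proof -
    from that \<open>y \<in> g\<close> have "h \<subseteq> g" by blast
    with antichain that \<open>g \<in> E\<close> show ?thesis by blast
  qed
  with \<open>g \<in> E\<close> show ?thesis
    unfolding min_supports_def subst_one_def by blast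
qed

lemma min_supports_subst_one_meeting_edge:
  assumes antichain: "\<forall>g\<in>E. \<forall>h\<in>E. g \<subseteq> h \<longrightarrow> g = h"
    and "sqfree_complete_intersection (subst_one E y)"
    and "g \<in> E" "y \<in> g" "m \<in> min_supports (subst_one E y)"
    and "z \<in> m" "z \<in> g" "z \<noteq> y"
  shows "m = g - {y}"
  using sqfree_complete_intersection_min_supports_eq[OF assms(2) assms(5)
      min_supports_subst_one_edge[OF antichain assms(3,4)]] assms(6-8)
  by blast

lemma not_subset_pair_if_card_ge_3:
  assumes "3 \<le> card A"
  shows "\<not> A \<subseteq> {a, b}"
proof
  assume "A \<subseteq> {a, b}"
  then have "card A \<le> card {a, b}"
    by (simp add: card_mono)
  also have "\<dots> \<le> 2"
    by (simp add: card_insert_if)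
  finally show False
    using assms by simp
qed

context
  fixes V :: "'a set" and E :: "'a set set"
  assumes NCI: "NCI_hypergraph V E"
begin

lemma NCI_antichain: "\<forall>g\<in>E. \<forall>h\<in>E. g \<subseteq> h \<longrightarrow> g = h"
  using NCI unfolding NCI_hypergraph_def simple_hypergraph_def by blast

lemma NCI_finite_edge:
  assumes "g \<in> E"
  shows "finite g"
proof -
  have "finite V" "E \<subseteq> Pow V"
    using NCI unfolding NCI_hypergraph_def simple_hypergraph_def by auto
  with assms show ?thesis
    by (meson PowD finite_subset in_mono)
qed

lemma NCI_subst_one_complete_intersection:
  assumes "g \<in> E" "y \<in> g"
  shows "sqfree_complete_intersection (subst_one E y)"
proof -
  have "y \<in> ideal_support (edge_ideal E)"
    unfolding ideal_support_def edge_ideal_def min_supports_antichain[OF NCI_antichain]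
    using assms by blast
  then show ?thesis
    using NCI unfolding NCI_hypergraph_def nearly_complete_intersection_def edge_ideal_def
    by blast
qed

lemma NCI_edges_meet_once:
  assumes "g \<in> E" "h \<in> E" "g \<noteq> h" "y \<in> g" "y \<in> h"
  shows "g \<inter> h = {y}"
proof (rule ccontr)
  assume "g \<inter> h \<noteq> {y}"
  then obtain z where z: "z \<in> g" "z \<in> h" "z \<noteq> y"
    using assms(4,5) by blast
  have "h - {y} = g - {y}"
    using min_supports_subst_one_meeting_edge[OF NCI_antichain
        NCI_subst_one_complete_intersection[OF assms(1,4)] assms(1,4)
        min_supports_subst_one_edge[OF NCI_antichain assms(2,5)]] z
    by blast
  with assms(3-5) show False
    by blast
qed

lemma NCI_pair_edge_between:
  assumes "e \<in> E" "f \<in> E" "e \<inter> f = {x}" "3 \<le> card e" "a \<in> e" "a \<noteq> x"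
  obtains b where "b \<in> f" "b \<noteq> x" "{a, b} \<in> E"
proof -
  note antichain = NCI_antichain
  note CI = NCI_subst_one_complete_intersection[OF \<open>e \<in> E\<close> \<open>a \<in> e\<close>]
  have "a \<notin> f"
    using assms(3,5,6) by blast
  then have "f - {a} = f"
    by blast
  with \<open>f \<in> E\<close> have "f \<in> subst_one E a"
    unfolding subst_one_def by (metis image_eqI)
  then obtain m where m: "m \<in> min_supports (subst_one E a)" "m \<subseteq> f"
    using exists_min_supports_subset NCI_finite_edge[OF \<open>f \<in> E\<close>] by blast
  then obtain k where k: "k \<in> E" "m = k - {a}"
    unfolding min_supports_def subst_one_def by blast
  have "x \<notin> m"
  proof
    assume "x \<in> m"
    then have "m = e - {a}"
      using min_supports_subst_one_meeting_edge[OF antichain CI \<open>e \<in> E\<close> \<open>a \<in> e\<close> m(1)]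
        assms(3,6) by blast
    with m(2) assms(3) have "e \<subseteq> {x, a}"
      by blast
    with not_subset_pair_if_card_ge_3[OF \<open>3 \<le> card e\<close>] show False
      by blast
  qed
  have "a \<in> k"
  proof (rule ccontr)
    assume "a \<notin> k"
    with k m(2) have "k \<subseteq> f"
      by blast
    with antichain k(1) \<open>f \<in> E\<close> have "k = f"
      by blast
    with \<open>x \<notin> m\<close> k \<open>a \<notin> f\<close> assms(3) show False
      by blast
  qed
  have "m \<noteq> {}"
  proof
    assume "m = {}"
    with k \<open>a \<in> e\<close> have "k \<subseteq> e"
      by blast
    with antichain k(1) \<open>e \<in> E\<close> have "k = e"
      by blast
    with \<open>m = {}\<close> k have "e \<subseteq> {x, a}"
      by blast
    with not_subset_pair_if_card_ge_3[OF \<open>3 \<le> card e\<close>] show False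
      by blast
  qed
  then obtain b where "b \<in> m"
    by blast
  with m(2) k \<open>x \<notin> m\<close> have "b \<in> f" "b \<noteq> x" "b \<in> k"
    by auto
  have "k \<noteq> f"
    using \<open>a \<in> k\<close> \<open>a \<notin> f\<close> by blast
  then have "k \<inter> f = {b}"
    using NCI_edges_meet_once k(1) \<open>f \<in> E\<close> \<open>b \<in> k\<close> \<open>b \<in> f\<close> by blast
  with k m(2) \<open>a \<in> k\<close> \<open>b \<in> k\<close> have "k = {a, b}"
    by blast
  with k(1) \<open>b \<in> f\<close> \<open>b \<noteq> x\<close> that show ?thesis
    by blast
qed

lemma NCI_no_pair_edge_between:
  assumes "e \<in> E" "f \<in> E" "e \<inter> f = {x}" "3 \<le> card e" "3 \<le> card f"
    and "a \<in> e" "a \<noteq> x" "b \<in> f" "b \<noteq> x"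
  shows "{a, b} \<notin> E"
proof
  assume "{a, b} \<in> E"
  note antichain = NCI_antichain
  have "x \<in> e"
    using assms(3) by blast
  note CI = NCI_subst_one_complete_intersection[OF \<open>e \<in> E\<close> \<open>x \<in> e\<close>]
  have "{a, b} - {x} = {a, b}"
    using assms(7,9) by blast
  with \<open>{a, b} \<in> E\<close> have "{a, b} \<in> subst_one E x"
    unfolding subst_one_def by (metis image_eqI)
  then obtain m where m: "m \<in> min_supports (subst_one E x)" "m \<subseteq> {a, b}"
    using exists_min_supports_subset[of "{a, b}"] by auto
  then obtain k where k: "k \<in> E" "m = k - {x}"
    unfolding min_supports_def subst_one_def by blast
  have disjoint: "m \<inter> g = {}"
    if "g \<in> E" "x \<in> g" "3 \<le> card g" "\<not> {a, b} \<subseteq> g" for g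
  proof (rule ccontr)
    assume "m \<inter> g \<noteq> {}"
    then obtain z where "z \<in> m" "z \<in> g"
      by blast
    moreover have "z \<noteq> x"
      using \<open>z \<in> m\<close> m(2) assms(7,9) by blast
    ultimately have "g - {x} \<subseteq> {a, b}"
      using min_supports_subst_one_meeting_edge[OF antichain CI that(1,2) m(1)] m(2) by blast
    with that(4) have "g \<subseteq> {x, a} \<or> g \<subseteq> {x, b}"
      by auto
    with not_subset_pair_if_card_ge_3[OF that(3)] show False
      by blast
  qed
  have "x \<in> f"
    using assms(3) by blast
  have "b \<notin> e" "a \<notin> f"
    using assms(3,6-9) by blast+
  then have "m \<inter> e = {}" "m \<inter> f = {}"
    using disjoint[OF assms(1) \<open>x \<in> e\<close> assms(4)] disjoint[OF assms(2) \<open>x \<in> f\<close> assms(5)]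
    by blast+
  with m(2) \<open>a \<in> e\<close> \<open>b \<in> f\<close> have "m = {}"
    by blast
  with k \<open>x \<in> e\<close> have "k \<subseteq> e"
    by blast
  with antichain k(1) \<open>e \<in> E\<close> have "k = e"
    by blast
  with \<open>m = {}\<close> k have "e \<subseteq> {x, a}"
    by blast
  with not_subset_pair_if_card_ge_3[OF \<open>3 \<le> card e\<close>] show False
    by blast
qed

end

theorem lemma3p2:
  assumes "NCI_hypergraph V E"
    and "hyperedge E e" and "hyperedge E f" and "e \<noteq> f"
  shows "e \<inter> f = {}"
proof (rule ccontr)
  assume "e \<inter> f \<noteq> {}"
  then obtain x where "x \<in> e" "x \<in> f"
    by blast
  have "e \<in> E" "3 \<le> card e" "f \<in> E" "3 \<le> card f"
    using assms(2,3) unfolding hyperedge_def by auto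
  have e_inter_f: "e \<inter> f = {x}"
    using NCI_edges_meet_once[OF assms(1)] \<open>e \<in> E\<close> \<open>f \<in> E\<close> assms(4) \<open>x \<in> e\<close> \<open>x \<in> f\<close>
    by blast
  have "e - {x} \<noteq> {}"
    using not_subset_pair_if_card_ge_3[OF \<open>3 \<le> card e\<close>, of x x] by blast
  then obtain a where "a \<in> e" "a \<noteq> x"
    by blast
  then obtain b where "b \<in> f" "b \<noteq> x" "{a, b} \<in> E"
    using NCI_pair_edge_between[OF assms(1) \<open>e \<in> E\<close> \<open>f \<in> E\<close> e_inter_f \<open>3 \<le> card e\<close>] by blast
  then show False
    using NCI_no_pair_edge_between[OF assms(1) \<open>e \<in> E\<close> \<open>f \<in> E\<close> e_inter_f
        \<open>3 \<le> card e\<close> \<open>3 \<le> card f\<close> \<open>a \<in> e\<close> \<open>a \<noteq> x\<close>] by blast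
qed

end
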